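(* Let $U:\mathbb{C}^*\to\mathbb{C}$ be a reasonable expansion with unique restrictions, between locally small categories, which has the expansion property; assume all morphisms in $\mathbb{C}$ are monomorphisms and $\mathbb{C}^*$ is directed. Let $A\in\mathrm{Ob}(\mathbb{C})$ be such that $\mathrm{Aut}(A)$ is finite. (a) $t^\sim_{\mathbb{C}}(A)$ is finite if and only if $U^{-1}(A)$ is finite and $t^\sim_{\mathbb{C}^*}(\mathcal{A})<\infty$ for all $\mathcal{A}\in U^{-1}(A)$, and in that case $$t^\sim_{\mathbb{C}}(A)=\sum_{\mathcal{A}\in U^{-1}(A)}\frac{|\mathrm{Aut}(\mathcal{A})|}{|\mathrm{Aut}(A)|}\cdot t^\sim_{\mathbb{C}^*}(\mathcal{A}).$$ (b) If $U^{-1}(A)$ is finite and $t^\sim_{\mathbb{C}^*}(\mathcal{A})<\infty$ for all $\mathcal{A}\in U^{-1}(A)$, and $\mathcal{A}_1,\dots,\mathcal{A}_n$ are representatives of the isomorphism classes (in $\mathbb{C}^*$) of objects in $U^{-1}(A)$, then $t^\sim_{\mathbb{C}}(A)=\sum_{i=1}^n t^\sim_{\mathbb{C}^*}(\mathcal{A}_i)$.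
   Context: Write $X\to Y$ if $\hom(X,Y)\ne\varnothing$; a category is directed if for all objects $A,B$ there is $C$ with $A\to C$, $B\to C$. An expansion of $\mathbb{C}$ is a category $\mathbb{C}^*$ with a functor $U:\mathbb{C}^*\to\mathbb{C}$ surjective on objects and injective on hom-sets; we regard $\hom_{\mathbb{C}^*}(\mathcal{A},\mathcal{B})\subseteq\hom_{\mathbb{C}}(U\mathcal{A},U\mathcal{B})$, and $U^{-1}(A)=\{\mathcal{A}:U(\mathcal{A})=A\}$. $U$ is reasonable if for every $e\in\hom(A,B)$ and $\mathcal{A}\in U^{-1}(A)$ there is $\mathcal{B}\in U^{-1}(B)$ with $e\in\hom(\mathcal{A},\mathcal{B})$; it has unique restrictions if for every $\mathcal{B}$ and $e\in\hom(A,U(\mathcal{B}))$ there is exactly one $\mathcal{A}\in U^{-1}(A)$ with $e\in\hom(\mathcal{A},\mathcal{B})$; it has the expansion property if for every $A$ there is $B$ with $\mathcal{A}\to\mathcal{B}$ for all $\mathcal{A}\in U^{-1}(A)$, $\mathcal{B}\in U^{-1}(B)$. In a category $\mathbb{D}$: for $f,f'\in\hom(A,B)$, $f\sim_A f'$ iff $f'=f\cdot\alpha$ for some $\alpha\in\mathrm{Aut}(A)$; $\binom{B}{A}=\hom(A,B)/{\sim_A}$, and $w\cdot(f/{\sim_A})=(w\cdot f)/{\sim_A}$. $C\overset{\sim}{\to}(B)^A_{k,t}$ means that for every $\chi:\binom{C}{A}\to\{0,\dots,k-1\}$ there is $w\in\hom(B,C)$ with $|\chi(w\cdot\binom{B}{A})|\le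 t$; $t^\sim_{\mathbb{D}}(A)$ is the least positive $n$ such that for all $k\ge2$ and all $B$ there is $C$ with $C\overset{\sim}{\to}(B)^A_{k,n}$, and $\infty$ otherwise. *)

theory Defs
  imports "HOL-Library.Extended_Nat" Complex_Main
begin

text \<open>A (locally small) category: objects, hom-sets, composition (cComp g f = g after f),
  identities. Composition w.f in the paper is cComp C w f.\<close>
record ('o, 'm) cat =
  cOb :: "'o set"
  cHom :: "'o \<Rightarrow> 'o \<Rightarrow> 'm set"
  cComp :: "'m \<Rightarrow> 'm \<Rightarrow> 'm"
  cId :: "'o \<Rightarrow> 'm"

definition is_category :: "('o, 'm) cat \<Rightarrow> bool" where
  "is_category C \<longleftrightarrow>
     (\<forall>A\<in>cOb C. \<forall>B\<in>cOb C. \<forall>D\<in>cOb C. \<forall>f\<in>cHom C A B. \<forall>g\<in>cHom C B D.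
        cComp C g f \<in> cHom C A D) \<and>
     (\<forall>A\<in>cOb C. \<forall>B\<in>cOb C. \<forall>D\<in>cOb C. \<forall>E\<in>cOb C.
        \<forall>f\<in>cHom C A B. \<forall>g\<in>cHom C B D. \<forall>h\<in>cHom C D E.
        cComp C h (cComp C g f) = cComp C (cComp C h g) f) \<and>
     (\<forall>A\<in>cOb C. cId C A \<in> cHom C A A) \<and>
     (\<forall>A\<in>cOb C. \<forall>B\<in>cOb C. \<forall>f\<in>cHom C A B.
        cComp C f (cId C A) = f \<and> cComp C (cId C B) f = f)"

definition arr :: "('o, 'm) cat \<Rightarrow> 'o \<Rightarrow> 'o \<Rightarrow> bool" where
  "arr C X Y \<longleftrightarrow> cHom C X Y \<noteq> {}"

definition directed :: "('o, 'm) cat \<Rightarrow> bool" where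
  "directed C \<longleftrightarrow> (\<forall>A\<in>cOb C. \<forall>B\<in>cOb C. \<exists>D\<in>cOb C. arr C A D \<and> arr C B D)"

definition all_mono :: "('o, 'm) cat \<Rightarrow> bool" where
  "all_mono C \<longleftrightarrow> (\<forall>A\<in>cOb C. \<forall>B\<in>cOb C. \<forall>X\<in>cOb C. \<forall>f\<in>cHom C A B.
      \<forall>g\<in>cHom C X A. \<forall>h\<in>cHom C X A. cComp C f g = cComp C f h \<longrightarrow> g = h)"

definition Aut :: "('o, 'm) cat \<Rightarrow> 'o \<Rightarrow> 'm set" where
  "Aut C A = {f \<in> cHom C A A. \<exists>g\<in>cHom C A A. cComp C g f = cId C A \<and> cComp C f g = cId C A}"

definition isomorphic :: "('o, 'm) cat \<Rightarrow> 'o \<Rightarrow> 'o \<Rightarrow> bool" where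
  "isomorphic C A B \<longleftrightarrow> (\<exists>f\<in>cHom C A B. \<exists>g\<in>cHom C B A.
      cComp C g f = cId C A \<and> cComp C f g = cId C B)"

definition simcls :: "('o, 'm) cat \<Rightarrow> 'o \<Rightarrow> 'o \<Rightarrow> 'm \<Rightarrow> 'm set" where
  "simcls C A B f = {f' \<in> cHom C A B. \<exists>\<alpha>\<in>Aut C A. f' = cComp C f \<alpha>}"

definition binom :: "('o, 'm) cat \<Rightarrow> 'o \<Rightarrow> 'o \<Rightarrow> 'm set set" where
  "binom C B A = simcls C A B ` cHom C A B"

definition binom_act :: "('o, 'm) cat \<Rightarrow> 'o \<Rightarrow> 'm \<Rightarrow> 'o \<Rightarrow> 'o \<Rightarrow> 'm set set" where
  "binom_act C D w B A = (\<lambda>f. simcls C A D (cComp C w f)) ` cHom C A B"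

definition ramsey_arrow :: "('o, 'm) cat \<Rightarrow> 'o \<Rightarrow> 'o \<Rightarrow> 'o \<Rightarrow> nat \<Rightarrow> nat \<Rightarrow> bool" where
  "ramsey_arrow C D B A k t \<longleftrightarrow>
     (\<forall>\<chi> :: 'm set \<Rightarrow> nat. (\<forall>X\<in>binom C D A. \<chi> X < k) \<longrightarrow>
        (\<exists>w\<in>cHom C B D. card (\<chi> ` binom_act C D w B A) \<le> t))"

definition small_ramsey_prop :: "('o, 'm) cat \<Rightarrow> 'o \<Rightarrow> nat \<Rightarrow> bool" where
  "small_ramsey_prop C A n \<longleftrightarrow>
     (\<forall>k\<ge>2. \<forall>B\<in>cOb C. \<exists>D\<in>cOb C. ramsey_arrow C D B A k n)"

definition tsim :: "('o, 'm) cat \<Rightarrow> 'o \<Rightarrow> enat" where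
  "tsim C A = (if \<exists>n>0. small_ramsey_prop C A n
               then enat (LEAST n. n > 0 \<and> small_ramsey_prop C A n) else \<infinity>)"

text \<open>Expansion U : C* \<rightarrow> C, with hom_{C*}(a,b) \<subseteq> hom_C(U a, U b) (U identity on morphisms,
  hence a functor injective on hom-sets), composition and identities inherited from C.\<close>
definition expansion :: "('e, 'm) cat \<Rightarrow> ('o, 'm) cat \<Rightarrow> ('e \<Rightarrow> 'o) \<Rightarrow> bool" where
  "expansion CS C U \<longleftrightarrow> is_category CS \<and> is_category C \<and>
     U ` cOb CS = cOb C \<and>
     (\<forall>a\<in>cOb CS. \<forall>b\<in>cOb CS. cHom CS a b \<subseteq> cHom C (U a) (U b)) \<and>
     cComp CS = cComp C \<and>
     (\<forall>a\<in>cOb CS. cId CS a = cId C (U a))"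

definition fiber :: "('e, 'm) cat \<Rightarrow> ('e \<Rightarrow> 'o) \<Rightarrow> 'o \<Rightarrow> 'e set" where
  "fiber CS U A = {a \<in> cOb CS. U a = A}"

definition reasonable :: "('e, 'm) cat \<Rightarrow> ('o, 'm) cat \<Rightarrow> ('e \<Rightarrow> 'o) \<Rightarrow> bool" where
  "reasonable CS C U \<longleftrightarrow> (\<forall>A\<in>cOb C. \<forall>B\<in>cOb C. \<forall>e\<in>cHom C A B. \<forall>a\<in>fiber CS U A.
      \<exists>b\<in>fiber CS U B. e \<in> cHom CS a b)"

definition unique_restrictions :: "('e, 'm) cat \<Rightarrow> ('o, 'm) cat \<Rightarrow> ('e \<Rightarrow> 'o) \<Rightarrow> bool" where
  "unique_restrictions CS C U \<longleftrightarrow> (\<forall>b\<in>cOb CS. \<forall>A\<in>cOb C. \<forall>e\<in>cHom C A (U b).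
      \<exists>!a. a \<in> fiber CS U A \<and> e \<in> cHom CS a b)"

definition expansion_property :: "('e, 'm) cat \<Rightarrow> ('o, 'm) cat \<Rightarrow> ('e \<Rightarrow> 'o) \<Rightarrow> bool" where
  "expansion_property CS C U \<longleftrightarrow> (\<forall>A\<in>cOb C. \<exists>B\<in>cOb C.
      \<forall>a\<in>fiber CS U A. \<forall>b\<in>fiber CS U B. arr CS a b)"

end

theory Submission
  imports Defs
begin

text \<open>Fix representatives \<open>R\<close> of the isomorphism classes of expansions of \<open>A\<close>.
  Lower bound: if \<open>d\<close> expands \<open>D\<close>, a class \<open>h/\<sim>\<^sub>A\<close> with \<open>h : r \<rightarrow> d\<close> a morphism of
  expansions determines \<open>r\<close> and \<open>h/\<sim>\<^sub>r\<close> (by unique restrictions), so bad colourings of the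
  \<open>binom(d, r)\<close>, \<open>r \<in> R\<close>, glue to one colouring of \<open>binom(D, A)\<close> recording \<open>r\<close> in its last
  digit; directedness and the expansion property give one \<open>B\<close> through which all the bad
  witnesses factor, whence \<open>t(A) \<ge> \<Sum> t(r)\<close>. Upper bound: every \<open>f : A \<rightarrow> B\<close> becomes a morphism
  \<open>r \<rightarrow> b\<close> of expansions after composing with an automorphism of \<open>A\<close>, so using the Ramsey
  property of each \<open>r \<in> R\<close> in turn along a chain \<open>b \<rightarrow> b\<^sub>1 \<rightarrow> \<dots>\<close> gives \<open>t(A) \<le> \<Sum> t(r)\<close>.
  Finally, restriction to \<open>r\<close> partitions \<open>Aut(A)\<close> into the sets of isomorphisms \<open>x \<cong> r\<close>,
  each in bijection with \<open>Aut(x)\<close>, which turns the sum over \<open>R\<close> into the weighted sum over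
  all expansions.\<close>

lemma add_mult_less_mult:
  fixes i n c M :: nat
  assumes "i < n" and "c < M"
  shows "i + n * c < n * M"
proof -
  have "i + n * c < n * Suc c" using assms(1) by simp
  also have "\<dots> \<le> n * M" using assms(2) by (intro mult_le_mono2) simp
  finally show ?thesis .
qed

lemma sum_card_le_card_if_disjoint:
  assumes "finite S" "finite Z" "\<forall>x\<in>S. F x \<subseteq> Z"
    and "\<forall>x\<in>S. \<forall>y\<in>S. x \<noteq> y \<longrightarrow> F x \<inter> F y = {}"
  shows "(\<Sum>x\<in>S. card (F x)) \<le> card Z"
proof -
  have "(\<Sum>x\<in>S. card (F x)) = card (\<Union>x\<in>S. F x)"
    using assms by (intro card_UN_disjoint[symmetric]) (auto intro: finite_subset)
  also have "\<dots> \<le> card Z" using assms by (intro card_mono) auto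
  finally show ?thesis .
qed

lemma sum_enat: "(\<Sum>x\<in>S. enat (f x)) = enat (\<Sum>x\<in>S. f x)"
  by (simp add: of_nat_eq_enat[symmetric])

lemma sum_enat_the_enat: "\<forall>x\<in>S. f x \<noteq> \<infinity> \<Longrightarrow> sum f S = enat (\<Sum>x\<in>S. the_enat (f x))"
  by (auto simp: sum_enat[symmetric] intro!: sum.cong)

section \<open>Categories and Ramsey degrees\<close>

definition inverse_pair :: "('o, 'm) cat \<Rightarrow> 'o \<Rightarrow> 'o \<Rightarrow> 'm \<Rightarrow> 'm \<Rightarrow> bool" where
  "inverse_pair X A B f g \<longleftrightarrow> f \<in> cHom X A B \<and> g \<in> cHom X B A \<and>
     cComp X g f = cId X A \<and> cComp X f g = cId X B"

lemma isomorphic_iff_inverse_pair: "isomorphic X A B \<longleftrightarrow> (\<exists>f g. inverse_pair X A B f g)"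
  unfolding isomorphic_def inverse_pair_def by blast

lemma Aut_iff_inverse_pair: "\<alpha> \<in> Aut X A \<longleftrightarrow> (\<exists>\<beta>. inverse_pair X A A \<alpha> \<beta>)"
  unfolding Aut_def inverse_pair_def by blast

lemma inverse_pair_sym: "inverse_pair X A B f g \<Longrightarrow> inverse_pair X B A g f"
  unfolding inverse_pair_def by blast

lemma Aut_in_hom: "\<alpha> \<in> Aut X A \<Longrightarrow> \<alpha> \<in> cHom X A A"
  unfolding Aut_def by blast

lemma simcls_memD: "h \<in> simcls X A B f \<Longrightarrow> h \<in> cHom X A B \<and> (\<exists>\<alpha>\<in>Aut X A. h = cComp X f \<alpha>)"
  unfolding simcls_def by blast

lemma ramsey_arrow_mono: "\<lbrakk>ramsey_arrow X D B A k n; n \<le> m\<rbrakk> \<Longrightarrow> ramsey_arrow X D B A k m"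
  unfolding ramsey_arrow_def by (fastforce intro: order.trans)

lemma small_ramsey_prop_mono: "\<lbrakk>small_ramsey_prop X A n; n \<le> m\<rbrakk> \<Longrightarrow> small_ramsey_prop X A m"
  unfolding small_ramsey_prop_def by (meson ramsey_arrow_mono)

lemma not_ramsey_arrow_iff:
  "\<not> ramsey_arrow X D B A k t \<longleftrightarrow>
     (\<exists>\<chi> :: 'm set \<Rightarrow> nat. (\<forall>Y\<in>binom X D A. \<chi> Y < k) \<and>
        (\<forall>w\<in>cHom X B D. t < card (\<chi> ` binom_act X D w B A)))"
  for X :: "('o, 'm) cat"
  unfolding ramsey_arrow_def by (auto simp: not_le)

lemma bad_colourings:
  fixes X :: "('o, 'm) cat"
  assumes "\<forall>x\<in>S. \<not> ramsey_arrow X d (BB x) x (K x) (s x)" and "\<forall>x\<in>S. K x \<le> M"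
  obtains c :: "'o \<Rightarrow> 'm set \<Rightarrow> nat" where "\<forall>x\<in>S. \<forall>Y\<in>binom X d x. c x Y < M"
    and "\<forall>x\<in>S. \<forall>v\<in>cHom X (BB x) d. s x < card (c x ` binom_act X d v (BB x) x)"
proof -
  have "\<forall>x\<in>S. \<exists>\<chi> :: 'm set \<Rightarrow> nat. (\<forall>Y\<in>binom X d x. \<chi> Y < K x) \<and>
      (\<forall>v\<in>cHom X (BB x) d. s x < card (\<chi> ` binom_act X d v (BB x) x))"
    using assms(1) unfolding not_ramsey_arrow_iff by blast
  then obtain c :: "'o \<Rightarrow> 'm set \<Rightarrow> nat" where c: "\<forall>x\<in>S. (\<forall>Y\<in>binom X d x. c x Y < K x) \<and>
      (\<forall>v\<in>cHom X (BB x) d. s x < card (c x ` binom_act X d v (BB x) x))"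
    by metis
  have "\<forall>x\<in>S. \<forall>Y\<in>binom X d x. c x Y < M" using c assms(2) by (meson order_less_le_trans)
  then show ?thesis using that c by blast
qed

locale category =
  fixes X :: "('o, 'm) cat"
  assumes is_category: "is_category X"
begin

lemma comp_closed:
  "\<lbrakk>A \<in> cOb X; B \<in> cOb X; D \<in> cOb X; f \<in> cHom X A B; g \<in> cHom X B D\<rbrakk>
    \<Longrightarrow> cComp X g f \<in> cHom X A D"
  using is_category unfolding is_category_def by blast

lemma comp_assoc:
  "\<lbrakk>A \<in> cOb X; B \<in> cOb X; D \<in> cOb X; E \<in> cOb X;
    f \<in> cHom X A B; g \<in> cHom X B D; h \<in> cHom X D E\<rbrakk>
    \<Longrightarrow> cComp X h (cComp X g f) = cComp X (cComp X h g) f"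
  using is_category unfolding is_category_def by blast

lemma id_closed: "A \<in> cOb X \<Longrightarrow> cId X A \<in> cHom X A A"
  using is_category unfolding is_category_def by blast

lemma comp_id_right: "\<lbrakk>A \<in> cOb X; B \<in> cOb X; f \<in> cHom X A B\<rbrakk> \<Longrightarrow> cComp X f (cId X A) = f"
  using is_category unfolding is_category_def by blast

lemma comp_id_left: "\<lbrakk>A \<in> cOb X; B \<in> cOb X; f \<in> cHom X A B\<rbrakk> \<Longrightarrow> cComp X (cId X B) f = f"
  using is_category unfolding is_category_def by blast

lemma arr_trans: "\<lbrakk>A \<in> cOb X; B \<in> cOb X; D \<in> cOb X; arr X A B; arr X B D\<rbrakk> \<Longrightarrow> arr X A D"
  unfolding arr_def using comp_closed by (metis all_not_in_conv)

lemma directed_upper_bound: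
  assumes "directed X" and "finite T" and "T \<noteq> {}" and "T \<subseteq> cOb X"
  shows "\<exists>b\<in>cOb X. \<forall>x\<in>T. arr X x b"
  using assms(2-4)
proof (induction T rule: finite_ne_induct)
  case (singleton x)
  then show ?case using id_closed unfolding arr_def by blast
next
  case (insert x T)
  then obtain b where b: "b \<in> cOb X" "\<forall>y\<in>T. arr X y b" by auto
  moreover obtain b' where "b' \<in> cOb X" "arr X x b'" "arr X b b'"
    using \<open>directed X\<close> b insert.prems unfolding directed_def by blast
  ultimately show ?case using arr_trans insert.prems by blast
qed

lemma binom_act_subset_binom:
  "\<lbrakk>A \<in> cOb X; B \<in> cOb X; D \<in> cOb X; w \<in> cHom X B D\<rbrakk> \<Longrightarrow> binom_act X D w B A \<subseteq> binom X D A"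
  unfolding binom_act_def binom_def using comp_closed by blast

lemma inverse_pair_id: "A \<in> cOb X \<Longrightarrow> inverse_pair X A A (cId X A) (cId X A)"
  unfolding inverse_pair_def using id_closed comp_id_left by blast

lemma inverse_pair_comp:
  assumes A: "A \<in> cOb X" and B: "B \<in> cOb X" and D: "D \<in> cOb X"
    and fg: "inverse_pair X A B f g" and fg': "inverse_pair X B D f' g'"
  shows "inverse_pair X A D (cComp X f' f) (cComp X g g')"
proof -
  note h = fg[unfolded inverse_pair_def] fg'[unfolded inverse_pair_def]
  have comps: "cComp X f' f \<in> cHom X A D" "cComp X g g' \<in> cHom X D A"
    using comp_closed A B D h by blast+
  have "cComp X (cComp X g g') (cComp X f' f) = cComp X g (cComp X (cComp X g' f') f)"
    using comp_assoc[OF A D B A comps(1)] comp_assoc[OF A B D B] A B D h by metis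
  also have "\<dots> = cId X A" using h comp_id_left A B by simp
  finally have left: "cComp X (cComp X g g') (cComp X f' f) = cId X A" .
  have "cComp X (cComp X f' f) (cComp X g g') = cComp X f' (cComp X (cComp X f g) g')"
    using comp_assoc[OF D A B D comps(2)] comp_assoc[OF D B A B] A B D h by metis
  also have "\<dots> = cId X D" using h comp_id_left B D by simp
  finally show ?thesis unfolding inverse_pair_def using left comps by blast
qed

lemma isomorphic_refl: "A \<in> cOb X \<Longrightarrow> isomorphic X A A"
  unfolding isomorphic_iff_inverse_pair using inverse_pair_id by blast

lemma isomorphic_sym: "isomorphic X A B \<Longrightarrow> isomorphic X B A"
  unfolding isomorphic_def by blast

lemma isomorphic_trans:
  assumes "A \<in> cOb X" "B \<in> cOb X" "D \<in> cOb X" "isomorphic X A B" "isomorphic X B D"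
  shows "isomorphic X A D"
proof -
  obtain f g f' g' where "inverse_pair X A B f g" "inverse_pair X B D f' g'"
    using assms(4,5) unfolding isomorphic_iff_inverse_pair by blast
  then show ?thesis
    unfolding isomorphic_iff_inverse_pair using inverse_pair_comp assms(1-3) by blast
qed

lemma Aut_id: "A \<in> cOb X \<Longrightarrow> cId X A \<in> Aut X A"
  unfolding Aut_iff_inverse_pair using inverse_pair_id by blast

lemma Aut_comp:
  assumes "A \<in> cOb X" "\<alpha> \<in> Aut X A" "\<beta> \<in> Aut X A"
  shows "cComp X \<alpha> \<beta> \<in> Aut X A"
proof -
  obtain \<alpha>' \<beta>' where "inverse_pair X A A \<alpha> \<alpha>'" "inverse_pair X A A \<beta> \<beta>'"
    using assms(2,3) unfolding Aut_iff_inverse_pair by blast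
  then show ?thesis unfolding Aut_iff_inverse_pair using inverse_pair_comp assms(1) by blast
qed

lemma bij_betw_Aut_iso:
  assumes x: "x \<in> cOb X" and r: "r \<in> cOb X" and fg: "inverse_pair X x r f g"
  shows "bij_betw (cComp X f) (Aut X x) {\<alpha>. \<exists>\<beta>. inverse_pair X x r \<alpha> \<beta>}"
proof -
  have f: "f \<in> cHom X x r" and g: "g \<in> cHom X r x"
    and gf: "cComp X g f = cId X x" and fg_id: "cComp X f g = cId X r"
    using fg unfolding inverse_pair_def by auto
  have cancel: "cComp X g (cComp X f \<gamma>) = \<gamma>" if "\<gamma> \<in> cHom X x x" for \<gamma>
    using comp_assoc[OF x x r x that f g] gf comp_id_left[OF x x that] by simp
  show ?thesis
  proof (rule bij_betw_byWitness[where f' = "cComp X g"])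
    show "\<forall>\<gamma>\<in>Aut X x. cComp X g (cComp X f \<gamma>) = \<gamma>" using cancel[OF Aut_in_hom] by blast
    show "\<forall>\<alpha>\<in>{\<alpha>. \<exists>\<beta>. inverse_pair X x r \<alpha> \<beta>}. cComp X f (cComp X g \<alpha>) = \<alpha>"
      using comp_assoc[OF x r x r _ g f] fg_id comp_id_left[OF x r]
      unfolding inverse_pair_def by auto
    show "cComp X f ` Aut X x \<subseteq> {\<alpha>. \<exists>\<beta>. inverse_pair X x r \<alpha> \<beta>}"
    proof
      fix \<alpha> assume "\<alpha> \<in> cComp X f ` Aut X x"
      then obtain \<gamma> where "\<alpha> = cComp X f \<gamma>" "\<gamma> \<in> Aut X x" by blast
      moreover obtain \<gamma>' where "inverse_pair X x x \<gamma> \<gamma>'"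
        using \<open>\<gamma> \<in> Aut X x\<close> unfolding Aut_iff_inverse_pair by blast
      ultimately show "\<alpha> \<in> {\<alpha>. \<exists>\<beta>. inverse_pair X x r \<alpha> \<beta>}"
        using inverse_pair_comp[OF x x r _ fg] by blast
    qed
    show "cComp X g ` {\<alpha>. \<exists>\<beta>. inverse_pair X x r \<alpha> \<beta>} \<subseteq> Aut X x"
    proof
      fix \<gamma> assume "\<gamma> \<in> cComp X g ` {\<alpha>. \<exists>\<beta>. inverse_pair X x r \<alpha> \<beta>}"
      then obtain \<alpha> \<beta> where "\<gamma> = cComp X g \<alpha>" "inverse_pair X x r \<alpha> \<beta>" by blast
      then show "\<gamma> \<in> Aut X x"
        using inverse_pair_comp[OF x r x _ inverse_pair_sym[OF fg]]
        unfolding Aut_iff_inverse_pair by blast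
    qed
  qed
qed

lemma simcls_refl:
  assumes A: "A \<in> cOb X" and B: "B \<in> cOb X" and f: "f \<in> cHom X A B"
  shows "f \<in> simcls X A B f"
  unfolding simcls_def using f Aut_id[OF A] comp_id_right[OF A B f] by force

lemma simcls_subset:
  assumes A: "A \<in> cOb X" and B: "B \<in> cOb X" and f: "f \<in> cHom X A B" and h: "h \<in> simcls X A B f"
  shows "simcls X A B h \<subseteq> simcls X A B f"
proof
  fix h' assume "h' \<in> simcls X A B h"
  then obtain \<beta> where \<beta>: "\<beta> \<in> Aut X A" "h' \<in> cHom X A B" "h' = cComp X h \<beta>"
    unfolding simcls_def by blast
  obtain \<alpha> where \<alpha>: "\<alpha> \<in> Aut X A" "h = cComp X f \<alpha>" using simcls_memD[OF h] by blast
  have "h' = cComp X f (cComp X \<alpha> \<beta>)"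
    using \<alpha> \<beta> comp_assoc[OF A A A B Aut_in_hom[OF \<beta>(1)] Aut_in_hom[OF \<alpha>(1)] f] by simp
  then show "h' \<in> simcls X A B f" unfolding simcls_def using \<alpha> \<beta> Aut_comp A by blast
qed

lemma simcls_sym:
  assumes A: "A \<in> cOb X" and B: "B \<in> cOb X" and f: "f \<in> cHom X A B" and h: "h \<in> simcls X A B f"
  shows "f \<in> simcls X A B h"
proof -
  obtain \<alpha> where \<alpha>: "\<alpha> \<in> Aut X A" "h = cComp X f \<alpha>" using simcls_memD[OF h] by blast
  then obtain \<beta> where \<beta>: "inverse_pair X A A \<alpha> \<beta>" unfolding Aut_iff_inverse_pair by blast
  then have "\<beta> \<in> Aut X A" using Aut_iff_inverse_pair inverse_pair_sym by metis
  moreover have "cComp X h \<beta> = f"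
    using \<alpha>(2) \<beta> comp_assoc[OF A A A B _ _ f, of \<beta> \<alpha>] comp_id_right[OF A B f]
    unfolding inverse_pair_def by simp
  ultimately show ?thesis unfolding simcls_def using f by blast
qed

lemma simcls_eq:
  assumes A: "A \<in> cOb X" and B: "B \<in> cOb X" and f: "f \<in> cHom X A B" and h: "h \<in> simcls X A B f"
  shows "simcls X A B h = simcls X A B f"
proof
  show "simcls X A B h \<subseteq> simcls X A B f" using simcls_subset[OF A B f h] .
  show "simcls X A B f \<subseteq> simcls X A B h"
    using simcls_subset[OF A B _ simcls_sym[OF A B f h]] simcls_memD[OF h] by blast
qed

lemma simcls_comp_Aut:
  assumes A: "A \<in> cOb X" and B: "B \<in> cOb X" and f: "f \<in> cHom X A B" and \<gamma>: "\<gamma> \<in> Aut X A"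
  shows "simcls X A B (cComp X f \<gamma>) = simcls X A B f"
proof (rule simcls_eq[OF A B f])
  show "cComp X f \<gamma> \<in> simcls X A B f"
    unfolding simcls_def using comp_closed[OF A A B Aut_in_hom[OF \<gamma>] f] \<gamma> by blast
qed

lemma simcls_comp_left:
  assumes A: "A \<in> cOb X" and B: "B \<in> cOb X" and E: "E \<in> cOb X"
    and f: "f \<in> cHom X A B" and h: "h \<in> simcls X A B f" and w: "w \<in> cHom X B E"
  shows "simcls X A E (cComp X w h) = simcls X A E (cComp X w f)"
proof -
  obtain \<alpha> where \<alpha>: "\<alpha> \<in> Aut X A" "h = cComp X f \<alpha>" using simcls_memD[OF h] by blast
  then have "cComp X w h = cComp X (cComp X w f) \<alpha>"
    using comp_assoc[OF A A B E Aut_in_hom[OF \<alpha>(1)] f w] by simp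
  then show ?thesis using simcls_comp_Aut[OF A E _ \<alpha>(1)] comp_closed A B E f w by simp
qed

lemma not_small_ramsey_prop_0:
  assumes A: "A \<in> cOb X" shows "\<not> small_ramsey_prop X A 0"
proof
  assume "small_ramsey_prop X A 0"
  then obtain D where "D \<in> cOb X" "ramsey_arrow X D A A 2 0"
    unfolding small_ramsey_prop_def using A by blast
  then obtain w where "w \<in> cHom X A D" "card ((\<lambda>_. 0::nat) ` binom_act X D w A A) = 0"
    unfolding ramsey_arrow_def by (metis le_zero_eq zero_less_numeral)
  moreover have "binom_act X D w A A \<noteq> {}" unfolding binom_act_def using id_closed A by blast
  ultimately show False by (simp add: image_constant_conv)
qed

lemma small_ramsey_prop_iff_tsim_le:
  assumes A: "A \<in> cOb X"
  shows "small_ramsey_prop X A n \<longleftrightarrow> tsim X A \<le> enat n"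
proof
  assume n: "small_ramsey_prop X A n"
  then have "n > 0" using not_small_ramsey_prop_0[OF A] by (cases n) auto
  with n show "tsim X A \<le> enat n" unfolding tsim_def by (auto intro: Least_le)
next
  assume le: "tsim X A \<le> enat n"
  then have ex: "\<exists>m>0. small_ramsey_prop X A m" unfolding tsim_def by (auto split: if_splits)
  then have "small_ramsey_prop X A (LEAST m. m > 0 \<and> small_ramsey_prop X A m)"
    using LeastI_ex[OF ex] by blast
  moreover have "(LEAST m. m > 0 \<and> small_ramsey_prop X A m) \<le> n"
    using le ex unfolding tsim_def by simp
  ultimately show "small_ramsey_prop X A n" by (rule small_ramsey_prop_mono)
qed

lemma one_le_tsim: "A \<in> cOb X \<Longrightarrow> 1 \<le> tsim X A"
  using small_ramsey_prop_iff_tsim_le[of A 0] not_small_ramsey_prop_0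
  by (metis enat_0 ileI1 not_le one_eSuc)

end

section \<open>Expansions and restrictions\<close>

locale ramsey_expansion =
  fixes C :: "('o, 'm) cat" and CS :: "('e, 'm) cat" and U :: "'e \<Rightarrow> 'o"
  assumes expansion: "expansion CS C U"
    and unique_restrictions: "unique_restrictions CS C U"
    and expansion_property: "expansion_property CS C U"
    and directed: "directed CS"
begin

sublocale C: category C using expansion unfolding expansion_def category_def by blast
sublocale S: category CS using expansion unfolding expansion_def category_def by blast

lemma expansion_facts:
  "U ` cOb CS = cOb C" "\<And>a b. \<lbrakk>a \<in> cOb CS; b \<in> cOb CS\<rbrakk> \<Longrightarrow> cHom CS a b \<subseteq> cHom C (U a) (U b)"
  "cComp CS = cComp C" "\<And>a. a \<in> cOb CS \<Longrightarrow> cId CS a = cId C (U a)"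
  using expansion unfolding expansion_def by simp_all

lemma comp_expansion [simp]: "cComp CS = cComp C"
  by (fact expansion_facts(3))

lemma id_expansion: "a \<in> cOb CS \<Longrightarrow> cId CS a = cId C (U a)"
  by (fact expansion_facts(4))

lemma hom_expansion: "\<lbrakk>a \<in> cOb CS; b \<in> cOb CS; f \<in> cHom CS a b\<rbrakk> \<Longrightarrow> f \<in> cHom C (U a) (U b)"
  using expansion_facts(2) by blast

lemma U_in_cOb: "a \<in> cOb CS \<Longrightarrow> U a \<in> cOb C"
  using expansion_facts(1) by blast

lemma fiber_iff: "a \<in> fiber CS U A \<longleftrightarrow> a \<in> cOb CS \<and> U a = A"
  unfolding fiber_def by blast

lemma fiber_nonempty: "A \<in> cOb C \<Longrightarrow> \<exists>a. a \<in> fiber CS U A"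
  unfolding fiber_iff using expansion_facts(1) by (metis imageE)

definition restriction :: "'o \<Rightarrow> 'e \<Rightarrow> 'm \<Rightarrow> 'e" where
  "restriction A d f = (THE a. a \<in> fiber CS U A \<and> f \<in> cHom CS a d)"

lemma restriction:
  assumes "d \<in> cOb CS" "A \<in> cOb C" "f \<in> cHom C A (U d)"
  shows "restriction A d f \<in> fiber CS U A \<and> f \<in> cHom CS (restriction A d f) d"
  unfolding restriction_def
  by (rule theI') (use unique_restrictions assms in \<open>simp add: unique_restrictions_def\<close>)

lemma restriction_unique:
  assumes "a \<in> fiber CS U A" "a' \<in> fiber CS U A" "d \<in> cOb CS"
    and "f \<in> cHom CS a d" "f \<in> cHom CS a' d"
  shows "a = a'"
proof -
  have "A \<in> cOb C" "f \<in> cHom C A (U d)"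
    using assms(1,3,4) hom_expansion U_in_cOb fiber_iff by auto
  then show ?thesis using unique_restrictions assms unfolding unique_restrictions_def by blast
qed

lemma restriction_eq:
  assumes a: "a \<in> fiber CS U A" and d: "d \<in> cOb CS" and f: "f \<in> cHom CS a d"
  shows "restriction A d f = a"
proof -
  have "A \<in> cOb C" "f \<in> cHom C A (U d)" using a d f hom_expansion U_in_cOb fiber_iff by auto
  then show ?thesis using restriction[OF d] restriction_unique[OF _ a d _ f] by blast
qed

lemma inverse_pair_in_fiber:
  "\<lbrakk>a \<in> fiber CS U A; b \<in> fiber CS U A; inverse_pair CS a b f g\<rbrakk> \<Longrightarrow> inverse_pair C A A f g"
  unfolding inverse_pair_def fiber_iff using hom_expansion id_expansion by fastforce

lemma Aut_expansion_subset: "a \<in> cOb CS \<Longrightarrow> Aut CS a \<subseteq> Aut C (U a)"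
  unfolding Aut_def using hom_expansion id_expansion by fastforce

lemma simcls_expansion_subset:
  "\<lbrakk>a \<in> cOb CS; d \<in> cOb CS; h \<in> cHom CS a d\<rbrakk> \<Longrightarrow> simcls CS a d h \<subseteq> simcls C (U a) (U d) h"
  unfolding simcls_def using hom_expansion Aut_expansion_subset by fastforce

text \<open>The inverse \<open>\<beta>\<close> is a morphism \<open>x' \<rightarrow> x\<close> for some expansion \<open>x'\<close>; then \<open>\<alpha> \<beta> = id\<close> lies in
  \<open>hom(x', r)\<close>, so \<open>x' = r\<close> by uniqueness of restrictions.\<close>
lemma inverse_pair_restriction:
  assumes A: "A \<in> cOb C" and \<alpha>\<beta>: "inverse_pair C A A \<alpha> \<beta>"
    and x: "x \<in> fiber CS U A" and r: "r \<in> fiber CS U A" and \<alpha>: "\<alpha> \<in> cHom CS x r"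
  shows "inverse_pair CS x r \<alpha> \<beta>"
proof -
  have xr: "x \<in> cOb CS" "r \<in> cOb CS" "U x = A" "U r = A" using x r fiber_iff by auto
  have "\<beta> \<in> cHom C A (U x)" using \<alpha>\<beta> xr unfolding inverse_pair_def by simp
  then obtain x' where x': "x' \<in> fiber CS U A" "\<beta> \<in> cHom CS x' x"
    using restriction[OF xr(1) A] by blast
  have "cComp CS \<alpha> \<beta> \<in> cHom CS x' r"
    using S.comp_closed[OF _ xr(1,2) x'(2) \<alpha>] x' fiber_iff by blast
  then have "cId CS r \<in> cHom CS x' r"
    using \<alpha>\<beta> id_expansion[OF xr(2)] xr unfolding inverse_pair_def by simp
  then have "x' = r" using restriction_unique[OF x'(1) r xr(2)] S.id_closed[OF xr(2)] by blast
  then show ?thesis using \<alpha>\<beta> \<alpha> x' id_expansion xr unfolding inverse_pair_def by auto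
qed

lemma simcls_expansion_iso:
  assumes A: "A \<in> cOb C" and d: "d \<in> cOb CS"
    and x: "x \<in> fiber CS U A" and h: "h \<in> cHom CS x d"
    and x': "x' \<in> fiber CS U A" and h': "h' \<in> cHom CS x' d" and eqv: "h' \<in> simcls C A (U d) h"
  obtains \<gamma> \<gamma>' where "inverse_pair CS x' x \<gamma> \<gamma>'" and "h' = cComp C h \<gamma>"
proof -
  have xo: "x \<in> cOb CS" "U x = A" using x fiber_iff by auto
  obtain \<gamma> where \<gamma>: "\<gamma> \<in> Aut C A" "h' = cComp C h \<gamma>" using simcls_memD[OF eqv] by blast
  obtain \<gamma>' where \<gamma>\<gamma>': "inverse_pair C A A \<gamma> \<gamma>'" using \<gamma>(1) unfolding Aut_iff_inverse_pair by blast
  have "\<gamma> \<in> cHom C A (U x)" using Aut_in_hom[OF \<gamma>(1)] xo by simp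
  then obtain y where y: "y \<in> fiber CS U A" "\<gamma> \<in> cHom CS y x"
    using restriction[OF xo(1) A] by blast
  have "h' \<in> cHom CS y d" using S.comp_closed[OF _ xo(1) d y(2) h] y(1) \<gamma>(2) fiber_iff by simp
  then have "y = x'" using restriction_unique[OF y(1) x' d _ h'] by blast
  then show ?thesis using that inverse_pair_restriction[OF A \<gamma>\<gamma>' x' x] y \<gamma>(2) by blast
qed

lemma isomorphic_trans_fiber:
  "\<lbrakk>x \<in> fiber CS U A; y \<in> fiber CS U A; z \<in> fiber CS U A; isomorphic CS x y; isomorphic CS y z\<rbrakk>
    \<Longrightarrow> isomorphic CS x z"
  using S.isomorphic_trans by (auto simp: fiber_iff)

lemma expansion_property_upper_bound:
  assumes "finite T" "T \<noteq> {}" "T \<subseteq> cOb CS"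
  obtains B where "B \<in> cOb C" and "\<forall>b\<in>fiber CS U B. \<forall>x\<in>T. arr CS x b"
proof -
  obtain b0 where b0: "b0 \<in> cOb CS" "\<forall>x\<in>T. arr CS x b0"
    using S.directed_upper_bound[OF directed assms] by blast
  then obtain B where B: "B \<in> cOb C" "\<forall>a\<in>fiber CS U (U b0). \<forall>b\<in>fiber CS U B. arr CS a b"
    using expansion_property U_in_cOb unfolding expansion_property_def by blast
  have "arr CS x b" if "b \<in> fiber CS U B" "x \<in> T" for b x
    using S.arr_trans[of x b0 b] b0 B that assms(3) by (auto simp: fiber_iff)
  then show ?thesis using that B(1) by blast
qed

section \<open>The lower bound\<close>

text \<open>This is well defined because the
  expansions in \<open>S\<close> are pairwise non-isomorphic.\<close>
lemma glued_colouring: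
  fixes idx :: "'e \<Rightarrow> nat" and c :: "'e \<Rightarrow> 'm set \<Rightarrow> nat" and n M :: nat
  assumes A: "A \<in> cOb C" and d: "d \<in> cOb CS"
    and S: "S \<subseteq> fiber CS U A" and distinct: "\<forall>x\<in>S. \<forall>y\<in>S. isomorphic CS x y \<longrightarrow> x = y"
    and idx: "\<forall>x\<in>S. idx x < n" and n: "0 < n"
    and c: "\<forall>x\<in>S. \<forall>Y\<in>binom CS d x. c x Y < M" and M: "0 < M"
  obtains \<chi> :: "'m set \<Rightarrow> nat" where "\<forall>Y\<in>binom C (U d) A. \<chi> Y < n * M"
    and "\<forall>x\<in>S. \<forall>h\<in>cHom CS x d. \<chi> (simcls C A (U d) h) = idx x + n * c x (simcls CS x d h)"
proof
  define P where "P Y p \<longleftrightarrow> fst p \<in> S \<and> snd p \<in> cHom CS (fst p) d \<and> Y = simcls C A (U d) (snd p)"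
    for Y p
  define \<chi> where "\<chi> Y = (if \<exists>p. P Y p
      then (case SOME p. P Y p of (y, g) \<Rightarrow> idx y + n * c y (simcls CS y d g)) else 0)" for Y
  have hom_C: "h \<in> cHom C A (U d)" if "x \<in> S" "h \<in> cHom CS x d" for x h
  proof -
    have "x \<in> cOb CS" "U x = A" using that(1) S by (auto simp: fiber_iff)
    then show ?thesis using hom_expansion[OF _ d that(2)] by simp
  qed
  show "\<forall>x\<in>S. \<forall>h\<in>cHom CS x d. \<chi> (simcls C A (U d) h) = idx x + n * c x (simcls CS x d h)"
  proof (intro ballI)
    fix x h assume x: "x \<in> S" and h: "h \<in> cHom CS x d"
    let ?Y = "simcls C A (U d) h"
    have ex: "P ?Y (x, h)" unfolding P_def using x h by simp
    obtain y g where yg: "(SOME p. P ?Y p) = (y, g)" by (cases "SOME p. P ?Y p") simp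
    have "P ?Y (y, g)" using someI[of "P ?Y", OF ex] yg by simp
    then have y: "y \<in> S" and g: "g \<in> cHom CS y d" and "?Y = simcls C A (U d) g"
      unfolding P_def by auto
    then have "g \<in> simcls C A (U d) h"
      using C.simcls_refl[OF A U_in_cOb[OF d] hom_C[OF y g]] by simp
    moreover have "x \<in> fiber CS U A" "y \<in> fiber CS U A" using x y S by auto
    ultimately obtain \<gamma> \<gamma>' where \<gamma>: "inverse_pair CS y x \<gamma> \<gamma>'" "g = cComp C h \<gamma>"
      using simcls_expansion_iso[OF A d _ h _ g] by blast
    then have "y = x" using distinct x y unfolding isomorphic_iff_inverse_pair by blast
    then have "\<gamma> \<in> Aut CS x" using \<gamma>(1) unfolding Aut_iff_inverse_pair by blast
    then have "simcls CS x d g = simcls CS x d h"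
      using \<gamma>(2) S.simcls_comp_Aut[OF _ d h] \<open>x \<in> fiber CS U A\<close> fiber_iff by simp
    then show "\<chi> ?Y = idx x + n * c x (simcls CS x d h)"
      unfolding \<chi>_def using ex yg \<open>y = x\<close> by auto
  qed
  show "\<forall>Y\<in>binom C (U d) A. \<chi> Y < n * M"
  proof
    fix Y
    show "\<chi> Y < n * M"
    proof (cases "\<exists>p. P Y p")
      case True
      obtain y g where yg: "(SOME p. P Y p) = (y, g)" by (cases "SOME p. P Y p") simp
      then have "P Y (y, g)" using someI_ex[OF True] by simp
      then have y: "y \<in> S" and cls: "simcls CS y d g \<in> binom CS d y"
        unfolding P_def binom_def by auto
      have "idx y + n * c y (simcls CS y d g) < n * M"
        using add_mult_less_mult idx c y cls by blast
      then show ?thesis unfolding \<chi>_def using True yg by simp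
    qed (use n M in \<open>simp add: \<chi>_def\<close>)
  qed
qed

lemma glued_colours_subset:
  fixes c :: "'m set \<Rightarrow> nat" and \<chi> :: "'m set \<Rightarrow> nat"
  assumes d: "d \<in> cOb CS" and b: "b \<in> cOb CS" and w: "w \<in> cHom CS b d"
    and x: "x \<in> fiber CS U A" and B: "B \<in> cOb CS" and v: "v \<in> cHom CS B b"
    and glued: "\<forall>h\<in>cHom CS x d. \<chi> (simcls C A (U d) h) = i + n * c (simcls CS x d h)"
  shows "(\<lambda>j. i + n * j) ` c ` binom_act CS d (cComp C w v) B x \<subseteq> \<chi> ` binom_act C (U d) w (U b) A"
proof
  fix j assume "j \<in> (\<lambda>j. i + n * j) ` c ` binom_act CS d (cComp C w v) B x"
  then obtain g where g: "g \<in> cHom CS x B"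
    and j: "j = i + n * c (simcls CS x d (cComp C (cComp C w v) g))"
    unfolding binom_act_def by auto
  have xo: "x \<in> cOb CS" "U x = A" using x by (auto simp: fiber_iff)
  have vg: "cComp C v g \<in> cHom CS x b" using S.comp_closed[OF xo(1) B b g v] by simp
  have "cComp C (cComp C w v) g = cComp C w (cComp C v g)"
    using S.comp_assoc[OF xo(1) B b d g v w] by simp
  then have "j = \<chi> (simcls C A (U d) (cComp C w (cComp C v g)))"
    using j glued S.comp_closed[OF xo(1) b d vg w] by simp
  moreover have "cComp C v g \<in> cHom C A (U b)" using hom_expansion[OF xo(1) b vg] xo by simp
  ultimately show "j \<in> \<chi> ` binom_act C (U d) w (U b) A" unfolding binom_act_def by blast
qed

text \<open>For each \<open>x \<in> S\<close>, the more than \<open>s x\<close> colours of \<open>c x\<close> seen through \<open>w\<close> reappear among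
  the colours of \<open>\<chi>\<close> on \<open>w \<cdot> binom(U b, A)\<close>, and these copies are disjoint since they differ in
  the last digit.\<close>
lemma sum_Suc_le_card_glued_colours:
  fixes idx :: "'e \<Rightarrow> nat" and c :: "'e \<Rightarrow> 'm set \<Rightarrow> nat" and \<chi> :: "'m set \<Rightarrow> nat"
  assumes A: "A \<in> cOb C" and d: "d \<in> cOb CS" and b: "b \<in> cOb CS" and w: "w \<in> cHom CS b d"
    and S: "finite S" "S \<subseteq> fiber CS U A"
    and idx: "inj_on idx S" "\<forall>x\<in>S. idx x < n"
    and \<chi>: "\<forall>Y\<in>binom C (U d) A. \<chi> Y < N"
    and glued: "\<forall>x\<in>S. \<forall>h\<in>cHom CS x d. \<chi> (simcls C A (U d) h) = idx x + n * c x (simcls CS x d h)"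
    and BB: "\<forall>x\<in>S. BB x \<in> cOb CS \<and> arr CS (BB x) b"
    and bad: "\<forall>x\<in>S. \<forall>v\<in>cHom CS (BB x) d. s x < card (c x ` binom_act CS d v (BB x) x)"
  shows "(\<Sum>x\<in>S. s x + 1) \<le> card (\<chi> ` binom_act C (U d) w (U b) A)"
proof -
  have "\<forall>x\<in>S. \<exists>u. u \<in> cHom CS (BB x) b" using BB unfolding arr_def by blast
  then obtain u where u: "\<forall>x\<in>S. u x \<in> cHom CS (BB x) b" by metis
  define I where "I x = (\<lambda>j. idx x + n * j) ` c x ` binom_act CS d (cComp C w (u x)) (BB x) x" for x
  have "s x + 1 \<le> card (I x)" if x: "x \<in> S" for x
  proof -
    have "0 < n" using idx(2) x by fastforce
    moreover have "cComp C w (u x) \<in> cHom CS (BB x) d"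
      using S.comp_closed[OF _ b d _ w] u BB x by simp
    ultimately show ?thesis
      using bad x unfolding I_def by (subst card_image) (auto simp: inj_on_def Suc_le_eq)
  qed
  then have "(\<Sum>x\<in>S. s x + 1) \<le> (\<Sum>x\<in>S. card (I x))" by (rule sum_mono)
  also have "\<dots> \<le> card (\<chi> ` binom_act C (U d) w (U b) A)"
  proof (rule sum_card_le_card_if_disjoint[OF S(1)])
    have "\<chi> ` binom_act C (U d) w (U b) A \<subseteq> {..<N}"
      using \<chi> C.binom_act_subset_binom[OF A U_in_cOb[OF b] U_in_cOb[OF d] hom_expansion[OF b d w]]
      by fastforce
    then show "finite (\<chi> ` binom_act C (U d) w (U b) A)" by (rule finite_subset) simp
    show "\<forall>x\<in>S. I x \<subseteq> \<chi> ` binom_act C (U d) w (U b) A"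
    proof
      fix x assume x: "x \<in> S"
      show "I x \<subseteq> \<chi> ` binom_act C (U d) w (U b) A"
        unfolding I_def by (rule glued_colours_subset[OF d b w]) (use x S(2) BB u glued in auto)
    qed
    show "\<forall>x\<in>S. \<forall>y\<in>S. x \<noteq> y \<longrightarrow> I x \<inter> I y = {}"
    proof (intro ballI impI)
      fix x y assume xy: "x \<in> S" "y \<in> S" "x \<noteq> y"
      then have "idx x \<noteq> idx y" "idx x < n" "idx y < n" using idx unfolding inj_on_def by auto
      then have "(idx x + n * i) mod n \<noteq> (idx y + n * j) mod n" for i j by simp
      then have "idx x + n * i \<noteq> idx y + n * j" for i j by metis
      then show "I x \<inter> I y = {}" unfolding I_def by blast
    qed
  qed
  finally show ?thesis .
qed

lemma sum_Suc_le_if_small_ramsey_prop: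
  assumes A: "A \<in> cOb C" and S: "finite S" "S \<subseteq> fiber CS U A"
    and distinct: "\<forall>x\<in>S. \<forall>y\<in>S. isomorphic CS x y \<longrightarrow> x = y"
    and fail: "\<forall>x\<in>S. \<not> small_ramsey_prop CS x (s x)"
    and t: "small_ramsey_prop C A t"
  shows "(\<Sum>x\<in>S. s x + 1) \<le> t"
proof (cases "S = {}")
  case False
  have "\<forall>x\<in>S. \<exists>k B. 2 \<le> k \<and> B \<in> cOb CS \<and> (\<forall>D\<in>cOb CS. \<not> ramsey_arrow CS D B x k (s x))"
    using fail unfolding small_ramsey_prop_def by blast
  then obtain K BB where KB: "\<forall>x\<in>S. 2 \<le> K x \<and> BB x \<in> cOb CS \<and>
      (\<forall>D\<in>cOb CS. \<not> ramsey_arrow CS D (BB x) x (K x) (s x))"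
    by metis
  obtain B where B: "B \<in> cOb C" "\<forall>b\<in>fiber CS U B. \<forall>x\<in>S. arr CS (BB x) b"
    using expansion_property_upper_bound[of "BB ` S"] S(1) False KB by auto
  define n where "n = card S"
  define M where "M = Max (K ` S)"
  obtain idx where "bij_betw idx S {0..<n}" using ex_bij_betw_finite_nat[OF S(1)] n_def by blast
  then have idx_inj: "inj_on idx S" and idx_lt: "\<forall>x\<in>S. idx x < n" unfolding bij_betw_def by auto
  have n: "0 < n" using S(1) False n_def by (simp add: card_gt_0_iff)
  have K_le_M: "\<forall>x\<in>S. K x \<le> M" using S(1) M_def by simp
  then have M: "2 \<le> M" using KB False by (meson order_trans ex_in_conv)
  moreover have "M \<le> n * M" using n by simp
  ultimately have "2 \<le> n * M" by linarith
  then obtain D where D: "D \<in> cOb C" "ramsey_arrow C D B A (n * M) t"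
    using t B(1) unfolding small_ramsey_prop_def by blast
  obtain d where "d \<in> fiber CS U D" using fiber_nonempty[OF D(1)] by blast
  then have d: "d \<in> cOb CS" "U d = D" by (auto simp: fiber_iff)
  obtain c :: "'e \<Rightarrow> 'm set \<Rightarrow> nat" where cM: "\<forall>x\<in>S. \<forall>Y\<in>binom CS d x. c x Y < M"
    and c: "\<forall>x\<in>S. \<forall>v\<in>cHom CS (BB x) d. s x < card (c x ` binom_act CS d v (BB x) x)"
    using bad_colourings[of S CS d BB K s M] KB K_le_M d(1) by blast
  have M0: "0 < M" using M by simp
  obtain \<chi> :: "'m set \<Rightarrow> nat" where \<chi>: "\<forall>Y\<in>binom C D A. \<chi> Y < n * M"
    and glued: "\<forall>x\<in>S. \<forall>h\<in>cHom CS x d. \<chi> (simcls C A D h) = idx x + n * c x (simcls CS x d h)"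
    by (rule glued_colouring[OF A d(1) S(2) distinct idx_lt n cM M0, unfolded d(2)])
  obtain w where w: "w \<in> cHom C B D" "card (\<chi> ` binom_act C D w B A) \<le> t"
    using D(2) \<chi> unfolding ramsey_arrow_def by blast
  obtain b where "b \<in> fiber CS U B" "w \<in> cHom CS b d"
    using restriction[OF d(1) B(1)] w(1) d(2) by metis
  then have b: "b \<in> cOb CS" "U b = B" "w \<in> cHom CS b d" and "\<forall>x\<in>S. arr CS (BB x) b"
    using B(2) by (auto simp: fiber_iff)
  then have "(\<Sum>x\<in>S. s x + 1) \<le> card (\<chi> ` binom_act C D w B A)"
    using sum_Suc_le_card_glued_colours[OF A d(1) b(1) b(3) S idx_inj idx_lt, unfolded d(2) b(2)]
      \<chi> glued c KB by blast
  then show ?thesis using w(2) by linarith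
qed simp

section \<open>The upper bound\<close>

definition image_classes :: "'o \<Rightarrow> 'e set \<Rightarrow> 'e \<Rightarrow> 'e \<Rightarrow> 'm \<Rightarrow> 'm set set" where
  "image_classes A R b e w = (\<Union>r\<in>R. (\<lambda>g. simcls C A (U e) (cComp C w g)) ` cHom CS r b)"

text \<open>\<open>expansion_arrow e b R A k t\<close> is an analogue of \<open>U e \<rightarrow> (b)\<^sup>A\<^sub>k\<^sub>,\<^sub>t\<close> in which only the
  classes of \<open>w g\<close> with \<open>g : r \<rightarrow> b\<close> a morphism of expansions, \<open>r \<in> R\<close>, are counted.\<close>
definition expansion_arrow :: "'e \<Rightarrow> 'e \<Rightarrow> 'e set \<Rightarrow> 'o \<Rightarrow> nat \<Rightarrow> nat \<Rightarrow> bool" where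
  "expansion_arrow e b R A k t \<longleftrightarrow>
     (\<forall>\<chi> :: 'm set \<Rightarrow> nat. (\<forall>Y\<in>binom C (U e) A. \<chi> Y < k) \<longrightarrow>
        (\<exists>w\<in>cHom CS b e. card (\<chi> ` image_classes A R b e w) \<le> t))"

lemma image_classes_subset_binom:
  assumes "R \<subseteq> fiber CS U A" "b \<in> cOb CS" "e \<in> cOb CS" "w \<in> cHom CS b e"
  shows "image_classes A R b e w \<subseteq> binom C (U e) A"
proof
  fix Y assume "Y \<in> image_classes A R b e w"
  then obtain r g where r: "r \<in> R" and g: "g \<in> cHom CS r b"
    and Y: "Y = simcls C A (U e) (cComp C w g)"
    unfolding image_classes_def by blast
  have ro: "r \<in> cOb CS" "U r = A" using r assms(1) by (auto simp: fiber_iff)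
  have "cComp C w g \<in> cHom C A (U e)"
    using hom_expansion[OF ro(1) assms(3) S.comp_closed[OF ro(1) assms(2,3) g assms(4)]] ro by simp
  then show "Y \<in> binom C (U e) A" unfolding binom_def Y by blast
qed

lemma image_classes_comp:
  assumes "R \<subseteq> cOb CS" "b \<in> cOb CS" "b1 \<in> cOb CS" "e \<in> cOb CS"
    and v: "v \<in> cHom CS b b1" and w: "w \<in> cHom CS b1 e"
  shows "image_classes A R b e (cComp C w v) \<subseteq> image_classes A R b1 e w"
proof
  fix Y assume "Y \<in> image_classes A R b e (cComp C w v)"
  then obtain r g where r: "r \<in> R" and g: "g \<in> cHom CS r b"
    and Y: "Y = simcls C A (U e) (cComp C (cComp C w v) g)"
    unfolding image_classes_def by blast
  have ro: "r \<in> cOb CS" using r assms(1) by blast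
  have "cComp C (cComp C w v) g = cComp C w (cComp C v g)"
    using S.comp_assoc[OF ro assms(2,3,4) g v w] by simp
  moreover have "cComp C v g \<in> cHom CS r b1" using S.comp_closed[OF ro assms(2,3) g v] by simp
  ultimately show "Y \<in> image_classes A R b1 e w"
    unfolding image_classes_def Y using r by (intro UN_I[OF r] image_eqI) auto
qed

text \<open>Well defined because \<open>\<sim>\<^sub>r\<close> in \<open>CS\<close> refines \<open>\<sim>\<^sub>A\<close> in \<open>C\<close>.\<close>
lemma pullback_colouring:
  fixes \<chi> :: "'m set \<Rightarrow> nat"
  assumes r: "r \<in> fiber CS U A" and b: "b \<in> cOb CS" and e: "e \<in> cOb CS"
    and w: "w \<in> cHom CS b e" and \<chi>: "\<forall>Y\<in>binom C (U e) A. \<chi> Y < k"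
  obtains \<chi>' :: "'m set \<Rightarrow> nat" where "\<forall>Y\<in>binom CS b r. \<chi>' Y < k"
    and "\<forall>h\<in>cHom CS r b. \<chi>' (simcls CS r b h) = \<chi> (simcls C A (U e) (cComp C w h))"
proof
  define \<chi>' where "\<chi>' Y = \<chi> (simcls C A (U e) (cComp C w (SOME h. h \<in> Y)))" for Y
  have ro: "r \<in> cOb CS" "U r = A" using r by (auto simp: fiber_iff)
  show eq: "\<forall>h\<in>cHom CS r b. \<chi>' (simcls CS r b h) = \<chi> (simcls C A (U e) (cComp C w h))"
  proof
    fix h assume h: "h \<in> cHom CS r b"
    have "(SOME h'. h' \<in> simcls CS r b h) \<in> simcls CS r b h"
      using S.simcls_refl[OF ro(1) b h] by (rule someI)
    then have "(SOME h'. h' \<in> simcls CS r b h) \<in> simcls C A (U b) h"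
      using simcls_expansion_subset[OF ro(1) b h] ro(2) by blast
    then show "\<chi>' (simcls CS r b h) = \<chi> (simcls C A (U e) (cComp C w h))"
      using C.simcls_comp_left[OF U_in_cOb[OF ro(1)] U_in_cOb[OF b] U_in_cOb[OF e]]
        hom_expansion[OF ro(1) b h] hom_expansion[OF b e w] ro(2) unfolding \<chi>'_def by simp
  qed
  show "\<forall>Y\<in>binom CS b r. \<chi>' Y < k"
  proof
    fix Y assume "Y \<in> binom CS b r"
    then obtain h where h: "h \<in> cHom CS r b" "Y = simcls CS r b h" unfolding binom_def by blast
    have "cComp C w h \<in> cHom C A (U e)"
      using hom_expansion[OF ro(1) e S.comp_closed[OF ro(1) b e h(1) w]] ro(2) by simp
    then show "\<chi>' Y < k" using \<chi> eq h unfolding binom_def by auto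
  qed
qed

lemma expansion_arrow_insert:
  assumes r: "r \<in> fiber CS U A" and R: "R \<subseteq> fiber CS U A"
    and b: "b \<in> cOb CS" and b1: "b1 \<in> cOb CS" and e: "e \<in> cOb CS"
    and r_arrow: "ramsey_arrow CS b1 b r k s" and R_arrow: "expansion_arrow e b1 R A k t"
  shows "expansion_arrow e b (insert r R) A k (s + t)"
  unfolding expansion_arrow_def
proof (intro allI impI)
  fix \<chi> :: "'m set \<Rightarrow> nat" assume \<chi>: "\<forall>Y\<in>binom C (U e) A. \<chi> Y < k"
  obtain w1 where w1: "w1 \<in> cHom CS b1 e" "card (\<chi> ` image_classes A R b1 e w1) \<le> t"
    using R_arrow \<chi> unfolding expansion_arrow_def by blast
  have ro: "r \<in> cOb CS" using r by (simp add: fiber_iff)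
  obtain \<chi>' :: "'m set \<Rightarrow> nat" where \<chi>'_k: "\<forall>Y\<in>binom CS b1 r. \<chi>' Y < k"
    and \<chi>'_eq: "\<forall>h\<in>cHom CS r b1. \<chi>' (simcls CS r b1 h) = \<chi> (simcls C A (U e) (cComp C w1 h))"
    using pullback_colouring[OF r b1 e w1(1) \<chi>] by blast
  obtain v where v: "v \<in> cHom CS b b1" "card (\<chi>' ` binom_act CS b1 v b r) \<le> s"
    using r_arrow \<chi>'_k unfolding ramsey_arrow_def by blast
  define w where "w = cComp C w1 v"
  have w: "w \<in> cHom CS b e" using S.comp_closed[OF b b1 e v(1) w1(1)] w_def by simp
  have "\<chi> (simcls C A (U e) (cComp C w g)) = \<chi>' (simcls CS r b1 (cComp C v g))"
    if "g \<in> cHom CS r b" for g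
    using \<chi>'_eq S.comp_closed[OF ro b b1 that v(1)] S.comp_assoc[OF ro b b1 e that v(1) w1(1)]
    unfolding w_def by simp
  then have new:
    "\<chi> ` (\<lambda>g. simcls C A (U e) (cComp C w g)) ` cHom CS r b = \<chi>' ` binom_act CS b1 v b r"
    unfolding binom_act_def image_image by (intro image_cong) simp_all
  have "\<chi> ` image_classes A R b1 e w1 \<subseteq> {..<k}"
    using \<chi> image_classes_subset_binom[OF R b1 e w1(1)] by fastforce
  then have fin: "finite (\<chi> ` image_classes A R b1 e w1)" by (rule finite_subset) simp
  have old: "\<chi> ` image_classes A R b e w \<subseteq> \<chi> ` image_classes A R b1 e w1"
  proof -
    have "R \<subseteq> cOb CS" using R by (auto simp: fiber_iff)
    then show ?thesis using image_classes_comp[OF _ b b1 e v(1) w1(1)] unfolding w_def by blast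
  qed
  have "image_classes A (insert r R) b e w =
      (\<lambda>g. simcls C A (U e) (cComp C w g)) ` cHom CS r b \<union> image_classes A R b e w"
    unfolding image_classes_def by simp
  then have "card (\<chi> ` image_classes A (insert r R) b e w) \<le>
      card (\<chi>' ` binom_act CS b1 v b r) + card (\<chi> ` image_classes A R b e w)"
    using new card_Un_le by (simp add: image_Un)
  also have "\<dots> \<le> s + t" using v(2) card_mono[OF fin old] w1(2) by linarith
  finally show "\<exists>w\<in>cHom CS b e. card (\<chi> ` image_classes A (insert r R) b e w) \<le> s + t"
    using w by blast
qed

lemma ex_expansion_arrow:
  assumes k: "2 \<le> k" and R: "finite R" "R \<subseteq> fiber CS U A"
    and srp: "\<forall>r\<in>R. small_ramsey_prop CS r (s r)" and b: "b \<in> cOb CS"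
  shows "\<exists>e\<in>cOb CS. expansion_arrow e b R A k (\<Sum>r\<in>R. s r)"
  using R srp b
proof (induction R arbitrary: b rule: finite_induct)
  case empty
  then show ?case
    unfolding expansion_arrow_def image_classes_def using S.id_closed by auto
next
  case (insert r R)
  have r: "r \<in> fiber CS U A" and r_cOb: "r \<in> cOb CS" using insert.prems by (auto simp: fiber_iff)
  obtain b1 where b1: "b1 \<in> cOb CS" "ramsey_arrow CS b1 b r k (s r)"
    using insert.prems k r_cOb unfolding small_ramsey_prop_def by blast
  obtain e where e: "e \<in> cOb CS" "expansion_arrow e b1 R A k (\<Sum>r\<in>R. s r)"
    using insert.IH[OF _ _ b1(1)] insert.prems by blast
  have "expansion_arrow e b (insert r R) A k (s r + (\<Sum>r\<in>R. s r))"
    using expansion_arrow_insert[OF r _ insert.prems(3) b1(1) e(1) b1(2) e(2)] insert.prems by blast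
  then show ?case using e(1) insert.hyps by auto
qed

text \<open>Every \<open>f : A \<rightarrow> B\<close> is a morphism from some expansion \<open>a\<close> of \<open>A\<close> into \<open>bb\<close>, and composing
  with an isomorphism \<open>r \<cong> a\<close> (an automorphism of \<open>A\<close>) does not change the class of \<open>w f\<close>.\<close>
lemma binom_act_subset_image_classes:
  assumes A: "A \<in> cOb C" and bb: "bb \<in> fiber CS U B" and e: "e \<in> cOb CS" and w: "w \<in> cHom CS bb e"
    and R: "R \<subseteq> fiber CS U A" and cover: "\<forall>a\<in>fiber CS U A. \<exists>r\<in>R. isomorphic CS a r"
  shows "binom_act C (U e) w B A \<subseteq> image_classes A R bb e w"
proof
  fix Y assume "Y \<in> binom_act C (U e) w B A"
  then obtain f where f: "f \<in> cHom C A B" and Y: "Y = simcls C A (U e) (cComp C w f)"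
    unfolding binom_act_def by blast
  have bbo: "bb \<in> cOb CS" "U bb = B" using bb by (auto simp: fiber_iff)
  obtain a where a: "a \<in> fiber CS U A" "f \<in> cHom CS a bb"
    using restriction[OF bbo(1) A] f bbo(2) by metis
  then obtain r where r: "r \<in> R" "isomorphic CS a r" using cover by blast
  then obtain \<alpha> \<beta> where \<alpha>\<beta>: "inverse_pair CS r a \<alpha> \<beta>"
    using S.isomorphic_sym unfolding isomorphic_iff_inverse_pair by blast
  have ro: "r \<in> cOb CS" "U r = A" and ao: "a \<in> cOb CS" using r(1) R a(1) by (auto simp: fiber_iff)
  have \<alpha>: "\<alpha> \<in> cHom CS r a" "\<alpha> \<in> Aut C A"
    using \<alpha>\<beta> inverse_pair_in_fiber[OF _ a(1) \<alpha>\<beta>] r(1) R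
    unfolding inverse_pair_def Aut_iff_inverse_pair by blast+
  have f\<alpha>: "cComp C f \<alpha> \<in> cHom CS r bb" using S.comp_closed[OF ro(1) ao bbo(1) \<alpha>(1) a(2)] by simp
  have "cComp C w f \<in> cHom C A (U e)"
    using hom_expansion[OF ao e S.comp_closed[OF ao bbo(1) e a(2) w]] a(1) by (simp add: fiber_iff)
  then have "Y = simcls C A (U e) (cComp C (cComp C w f) \<alpha>)"
    using C.simcls_comp_Aut[OF A U_in_cOb[OF e] _ \<alpha>(2)] Y by simp
  also have "cComp C (cComp C w f) \<alpha> = cComp C w (cComp C f \<alpha>)"
    using S.comp_assoc[OF ro(1) ao bbo(1) e \<alpha>(1) a(2) w] by simp
  finally show "Y \<in> image_classes A R bb e w" unfolding image_classes_def using r(1) f\<alpha> by blast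
qed

lemma small_ramsey_prop_sum:
  assumes A: "A \<in> cOb C" and R: "finite R" "R \<subseteq> fiber CS U A"
    and cover: "\<forall>a\<in>fiber CS U A. \<exists>r\<in>R. isomorphic CS a r"
    and srp: "\<forall>r\<in>R. small_ramsey_prop CS r (s r)"
  shows "small_ramsey_prop C A (\<Sum>r\<in>R. s r)"
  unfolding small_ramsey_prop_def
proof (intro allI impI ballI)
  fix k :: nat and B assume k: "2 \<le> k" and B: "B \<in> cOb C"
  obtain bb where bb: "bb \<in> fiber CS U B" using fiber_nonempty[OF B] by blast
  then have bbo: "bb \<in> cOb CS" "U bb = B" by (auto simp: fiber_iff)
  obtain e where e: "e \<in> cOb CS" "expansion_arrow e bb R A k (\<Sum>r\<in>R. s r)"
    using ex_expansion_arrow[OF k R srp bbo(1)] by blast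
  have "ramsey_arrow C (U e) B A k (\<Sum>r\<in>R. s r)"
    unfolding ramsey_arrow_def
  proof (intro allI impI)
    fix \<chi> :: "'m set \<Rightarrow> nat" assume \<chi>: "\<forall>Y\<in>binom C (U e) A. \<chi> Y < k"
    then obtain w where w: "w \<in> cHom CS bb e" "card (\<chi> ` image_classes A R bb e w) \<le> (\<Sum>r\<in>R. s r)"
      using e(2) unfolding expansion_arrow_def by blast
    have "\<chi> ` image_classes A R bb e w \<subseteq> {..<k}"
      using \<chi> image_classes_subset_binom[OF R(2) bbo(1) e(1) w(1)] by fastforce
    then have "finite (\<chi> ` image_classes A R bb e w)" by (rule finite_subset) simp
    then have "card (\<chi> ` binom_act C (U e) w B A) \<le> (\<Sum>r\<in>R. s r)"
      using card_mono binom_act_subset_image_classes[OF A bb e(1) w(1) R(2) cover] w(2)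
      by (meson image_mono order_trans)
    moreover have "w \<in> cHom C B (U e)" using hom_expansion[OF bbo(1) e(1) w(1)] bbo(2) by simp
    ultimately show "\<exists>w\<in>cHom C B (U e). card (\<chi> ` binom_act C (U e) w B A) \<le> (\<Sum>r\<in>R. s r)" by blast
  qed
  then show "\<exists>D\<in>cOb C. ramsey_arrow C D B A k (\<Sum>r\<in>R. s r)" using U_in_cOb[OF e(1)] by blast
qed

section \<open>Degrees of representatives\<close>

lemma tsim_le_sum:
  assumes A: "A \<in> cOb C" and R: "finite R" "R \<subseteq> fiber CS U A"
    and cover: "\<forall>a\<in>fiber CS U A. \<exists>r\<in>R. isomorphic CS a r"
  shows "tsim C A \<le> (\<Sum>r\<in>R. tsim CS r)"
proof (cases "\<exists>r\<in>R. tsim CS r = \<infinity>")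
  case True
  then obtain r where "r \<in> R" "tsim CS r = \<infinity>" by blast
  then have "\<infinity> \<le> (\<Sum>r\<in>R. tsim CS r)" using member_le_sum[of r R "tsim CS"] R(1) by simp
  then show ?thesis by simp
next
  case False
  then have fin: "\<forall>r\<in>R. tsim CS r = enat (the_enat (tsim CS r))" by auto
  then have "\<forall>r\<in>R. small_ramsey_prop CS r (the_enat (tsim CS r))"
    using S.small_ramsey_prop_iff_tsim_le R(2) by (auto simp: fiber_iff)
  then have "small_ramsey_prop C A (\<Sum>r\<in>R. the_enat (tsim CS r))"
    by (rule small_ramsey_prop_sum[OF A R cover])
  then have "tsim C A \<le> (\<Sum>r\<in>R. enat (the_enat (tsim CS r)))"
    using C.small_ramsey_prop_iff_tsim_le[OF A] by (simp add: sum_enat)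
  also have "\<dots> = (\<Sum>r\<in>R. tsim CS r)" using fin by simp
  finally show ?thesis .
qed

text \<open>Each \<open>x\<close> fails the Ramsey property at \<open>s x = tsim x - 1\<close>; an infinite degree is
  replaced by \<open>s x = t\<close>, which is then ruled out by \<open>s x + 1 \<le> t\<close>.\<close>
lemma sum_tsim_le:
  assumes A: "A \<in> cOb C" and S: "finite S" "S \<subseteq> fiber CS U A"
    and distinct: "\<forall>x\<in>S. \<forall>y\<in>S. isomorphic CS x y \<longrightarrow> x = y"
  shows "(\<Sum>x\<in>S. tsim CS x) \<le> tsim C A"
proof (cases "tsim C A")
  case (enat t)
  then have t: "small_ramsey_prop C A t" using C.small_ramsey_prop_iff_tsim_le[OF A] by simp
  define s where "s x = (case tsim CS x of enat m \<Rightarrow> m - 1 | \<infinity> \<Rightarrow> t)" for x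
  have x_cOb: "x \<in> cOb CS" if "x \<in> S" for x using that S(2) by (auto simp: fiber_iff)
  have tsim_pos: "tsim CS x = enat m \<Longrightarrow> 0 < m" if "x \<in> S" for x m
    using S.one_le_tsim[OF x_cOb[OF that]] by (simp add: one_enat_def)
  have "\<not> small_ramsey_prop CS x (s x)" if "x \<in> S" for x
    using S.small_ramsey_prop_iff_tsim_le[OF x_cOb[OF that]] tsim_pos[OF that]
    by (cases "tsim CS x") (auto simp: s_def)
  then have sum_le: "(\<Sum>x\<in>S. s x + 1) \<le> t"
    using sum_Suc_le_if_small_ramsey_prop[OF A S distinct _ t] by blast
  have "tsim CS x = enat (s x + 1)" if x: "x \<in> S" for x
  proof (cases "tsim CS x")
    case infinity
    have "s x + 1 \<le> (\<Sum>x\<in>S. s x + 1)" using member_le_sum[of x S "\<lambda>x. s x + 1"] x S(1) by simp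
    then show ?thesis using sum_le infinity by (simp add: s_def)
  qed (use tsim_pos[OF x] in \<open>simp add: s_def\<close>)
  then have "(\<Sum>x\<in>S. tsim CS x) = enat (\<Sum>x\<in>S. s x + 1)" by (simp add: sum_enat)
  then show ?thesis using sum_le enat by simp
qed simp

lemma tsim_fiber_le:
  assumes A: "A \<in> cOb C" and a: "a \<in> fiber CS U A"
  shows "tsim CS a \<le> tsim C A"
  using sum_tsim_le[OF A, of "{a}"] a by simp

definition iso_representatives :: "'o \<Rightarrow> 'e set \<Rightarrow> bool" where
  "iso_representatives A R \<longleftrightarrow> R \<subseteq> fiber CS U A \<and>
     (\<forall>a\<in>fiber CS U A. \<exists>r\<in>R. isomorphic CS a r) \<and>
     (\<forall>r1\<in>R. \<forall>r2\<in>R. isomorphic CS r1 r2 \<longrightarrow> r1 = r2)"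

lemma iso_representatives_exist: "\<exists>R. iso_representatives A R"
proof -
  define rep where "rep a = (SOME r. r \<in> fiber CS U A \<and> isomorphic CS r a)" for a
  have rep: "rep a \<in> fiber CS U A \<and> isomorphic CS (rep a) a" if "a \<in> fiber CS U A" for a
    unfolding rep_def by (rule someI[of _ a]) (use that S.isomorphic_refl in \<open>auto simp: fiber_iff\<close>)
  have rep_eq: "rep a = rep b"
    if "a \<in> fiber CS U A" "b \<in> fiber CS U A" "isomorphic CS a b" for a b
  proof -
    have "r \<in> fiber CS U A \<and> isomorphic CS r a \<longleftrightarrow> r \<in> fiber CS U A \<and> isomorphic CS r b" for r
      using that isomorphic_trans_fiber S.isomorphic_sym by blast
    then show ?thesis unfolding rep_def by simp
  qed
  have "iso_representatives A (rep ` fiber CS U A)"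
    unfolding iso_representatives_def
  proof (intro conjI ballI impI)
    show "rep ` fiber CS U A \<subseteq> fiber CS U A" using rep by blast
    show "\<exists>r\<in>rep ` fiber CS U A. isomorphic CS a r" if "a \<in> fiber CS U A" for a
      using rep[OF that] S.isomorphic_sym that by blast
    fix r1 r2 assume r12: "r1 \<in> rep ` fiber CS U A" "r2 \<in> rep ` fiber CS U A" "isomorphic CS r1 r2"
    then obtain a b where a: "a \<in> fiber CS U A" "r1 = rep a" and b: "b \<in> fiber CS U A" "r2 = rep b"
      by blast
    have "isomorphic CS a r1" "isomorphic CS r2 b" using rep a b S.isomorphic_sym by blast+
    then have "isomorphic CS a b"
      using isomorphic_trans_fiber[OF a(1) _ b(1)] isomorphic_trans_fiber[of r1 _ r2 b]
        r12(3) rep a b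
      by blast
    then show "r1 = r2" using rep_eq a b by blast
  qed
  then show ?thesis by blast
qed

lemma iso_representatives_replace:
  assumes R: "iso_representatives A R" and r: "r \<in> R"
    and a: "a \<in> fiber CS U A" and ar: "isomorphic CS a r"
  shows "iso_representatives A (insert a (R - {r}))"
proof -
  have Rf: "R \<subseteq> fiber CS U A" and cover: "\<forall>a\<in>fiber CS U A. \<exists>r\<in>R. isomorphic CS a r"
    and distinct: "\<forall>r1\<in>R. \<forall>r2\<in>R. isomorphic CS r1 r2 \<longrightarrow> r1 = r2"
    using R unfolding iso_representatives_def by auto
  have rf: "r \<in> fiber CS U A" using r Rf by blast
  have iso_a: "isomorphic CS x a \<longleftrightarrow> isomorphic CS x r" if "x \<in> fiber CS U A" for x
    using isomorphic_trans_fiber[OF that a rf] isomorphic_trans_fiber[OF that rf a]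
      S.isomorphic_sym[OF ar] ar by blast
  show ?thesis
    unfolding iso_representatives_def
  proof (intro conjI ballI impI)
    show "insert a (R - {r}) \<subseteq> fiber CS U A" using Rf a by blast
    fix c assume c: "c \<in> fiber CS U A"
    then obtain r' where "r' \<in> R" "isomorphic CS c r'" using cover by blast
    then show "\<exists>x\<in>insert a (R - {r}). isomorphic CS c x" using iso_a[OF c] by (cases "r' = r") auto
  next
    have not_a: "\<not> isomorphic CS y a" if "y \<in> R - {r}" for y
      using that iso_a distinct r Rf by blast
    fix x y assume "x \<in> insert a (R - {r})" "y \<in> insert a (R - {r})" "isomorphic CS x y"
    then show "x = y" using not_a distinct S.isomorphic_sym by blast
  qed
qed

lemma isomorphism_class_subset_restriction:
  assumes A: "A \<in> cOb C" and r: "r \<in> fiber CS U A"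
  shows "{x \<in> fiber CS U A. isomorphic CS x r} \<subseteq> restriction A r ` Aut C A"
proof
  fix x assume "x \<in> {x \<in> fiber CS U A. isomorphic CS x r}"
  then obtain f g where x: "x \<in> fiber CS U A" and fg: "inverse_pair CS x r f g"
    unfolding isomorphic_iff_inverse_pair by blast
  have "inverse_pair C A A f g" using inverse_pair_in_fiber[OF x r fg] .
  then have "f \<in> Aut C A" unfolding Aut_iff_inverse_pair by blast
  moreover have "restriction A r f = x"
    using restriction_eq[OF x _] fg r unfolding inverse_pair_def by (simp add: fiber_iff)
  ultimately show "x \<in> restriction A r ` Aut C A" by blast
qed

lemma finite_fiber:
  assumes A: "A \<in> cOb C" and Aut: "finite (Aut C A)"
    and R: "iso_representatives A R" "finite R"
  shows "finite (fiber CS U A)"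
proof (rule finite_subset)
  show "fiber CS U A \<subseteq> (\<Union>r\<in>R. restriction A r ` Aut C A)"
  proof
    fix a assume a: "a \<in> fiber CS U A"
    then obtain r where r: "r \<in> R" "r \<in> fiber CS U A" "isomorphic CS a r"
      using R(1) unfolding iso_representatives_def by blast
    then have "a \<in> restriction A r ` Aut C A"
      using isomorphism_class_subset_restriction[OF A r(2)] a by blast
    then show "a \<in> (\<Union>r\<in>R. restriction A r ` Aut C A)" using r(1) by blast
  qed
  show "finite (\<Union>r\<in>R. restriction A r ` Aut C A)" using R(2) Aut by blast
qed

lemma finite_iso_representatives:
  assumes A: "A \<in> cOb C" and t: "tsim C A \<noteq> \<infinity>" and R: "iso_representatives A R"
  shows "finite R"
proof (rule ccontr)
  assume "infinite R"
  then obtain S where S: "finite S" "card S = Suc (the_enat (tsim C A))" "S \<subseteq> R"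
    using infinite_arbitrarily_large by blast
  have "S \<subseteq> fiber CS U A" "\<forall>x\<in>S. \<forall>y\<in>S. isomorphic CS x y \<longrightarrow> x = y"
    using R S(3) unfolding iso_representatives_def by blast+
  then have "(\<Sum>x\<in>S. tsim CS x) \<le> tsim C A" using sum_tsim_le[OF A S(1)] by blast
  moreover have "(\<Sum>x\<in>S. 1) \<le> (\<Sum>x\<in>S. tsim CS x)"
    using S.one_le_tsim \<open>S \<subseteq> fiber CS U A\<close> by (intro sum_mono) (auto simp: fiber_iff)
  ultimately have "enat (card S) \<le> tsim C A" by (simp add: of_nat_eq_enat[symmetric])
  then show False using S(2) t by (cases "tsim C A") auto
qed

lemma tsim_eq_sum_representatives:
  assumes A: "A \<in> cOb C" and R: "iso_representatives A R" "finite R"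
  shows "tsim C A = (\<Sum>r\<in>R. tsim CS r)"
  using tsim_le_sum[OF A R(2)] sum_tsim_le[OF A R(2)] R(1)
  unfolding iso_representatives_def by (meson order_antisym)

lemma tsim_isomorphic_in_fiber:
  assumes A: "A \<in> cOb C" and t: "tsim C A \<noteq> \<infinity>"
    and R: "iso_representatives A R" and r: "r \<in> R"
    and a: "a \<in> fiber CS U A" and ar: "isomorphic CS a r"
  shows "tsim CS a = tsim CS r"
proof -
  have R': "iso_representatives A (insert a (R - {r}))"
    using iso_representatives_replace[OF R r a ar] .
  have fin: "finite R" using finite_iso_representatives[OF A t R] .
  have "a \<notin> R - {r}" using R r a ar unfolding iso_representatives_def by blast
  then have "tsim C A = tsim CS a + (\<Sum>x\<in>R - {r}. tsim CS x)"
    using tsim_eq_sum_representatives[OF A R'] fin by simp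
  moreover have "tsim C A = tsim CS r + (\<Sum>x\<in>R - {r}. tsim CS x)"
    using tsim_eq_sum_representatives[OF A R fin] fin r by (simp add: sum.remove)
  ultimately show ?thesis using t by (metis add.commute enat_add_left_cancel plus_eq_infty_iff_enat)
qed

section \<open>Counting automorphisms\<close>

lemma Aut_eq_UN_iso:
  assumes A: "A \<in> cOb C" and r: "r \<in> fiber CS U A"
  shows "Aut C A = (\<Union>x\<in>{x \<in> fiber CS U A. isomorphic CS x r}. {\<alpha>. \<exists>\<beta>. inverse_pair CS x r \<alpha> \<beta>})"
proof (intro equalityI subsetI)
  fix \<alpha> assume \<alpha>: "\<alpha> \<in> Aut C A"
  then obtain \<beta> where \<alpha>\<beta>: "inverse_pair C A A \<alpha> \<beta>" unfolding Aut_iff_inverse_pair by blast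
  have ro: "r \<in> cOb CS" "U r = A" using r by (auto simp: fiber_iff)
  obtain x where x: "x \<in> fiber CS U A" "\<alpha> \<in> cHom CS x r"
    using restriction[OF ro(1) A] Aut_in_hom[OF \<alpha>] ro(2) by metis
  then have "inverse_pair CS x r \<alpha> \<beta>" using inverse_pair_restriction[OF A \<alpha>\<beta> _ r] by blast
  then show "\<alpha> \<in> (\<Union>x\<in>{x \<in> fiber CS U A. isomorphic CS x r}. {\<alpha>. \<exists>\<beta>. inverse_pair CS x r \<alpha> \<beta>})"
    using x(1) unfolding isomorphic_iff_inverse_pair by blast
next
  fix \<alpha> assume "\<alpha> \<in> (\<Union>x\<in>{x \<in> fiber CS U A. isomorphic CS x r}. {\<alpha>. \<exists>\<beta>. inverse_pair CS x r \<alpha> \<beta>})"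
  then obtain x \<beta> where "x \<in> fiber CS U A" "inverse_pair CS x r \<alpha> \<beta>" by blast
  then show "\<alpha> \<in> Aut C A"
    using inverse_pair_in_fiber[OF _ r] unfolding Aut_iff_inverse_pair by blast
qed

lemma sum_card_Aut_isomorphism_class:
  assumes A: "A \<in> cOb C" and Aut: "finite (Aut C A)" and r: "r \<in> fiber CS U A"
  shows "(\<Sum>x\<in>{x \<in> fiber CS U A. isomorphic CS x r}. card (Aut CS x)) = card (Aut C A)"
proof -
  let ?cls = "{x \<in> fiber CS U A. isomorphic CS x r}"
  let ?Iso = "\<lambda>x. {\<alpha>. \<exists>\<beta>. inverse_pair CS x r \<alpha> \<beta>}"
  have ro: "r \<in> cOb CS" using r by (simp add: fiber_iff)
  have "card (Aut CS x) = card (?Iso x)" if x: "x \<in> ?cls" for x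
  proof -
    obtain f g where "inverse_pair CS x r f g"
      using x unfolding isomorphic_iff_inverse_pair by blast
    moreover have "x \<in> cOb CS" using x by (simp add: fiber_iff)
    ultimately show ?thesis using S.bij_betw_Aut_iso[OF _ ro] bij_betw_same_card by blast
  qed
  then have "(\<Sum>x\<in>?cls. card (Aut CS x)) = (\<Sum>x\<in>?cls. card (?Iso x))" by simp
  also have "\<dots> = card (\<Union>x\<in>?cls. ?Iso x)"
  proof (rule card_UN_disjoint[symmetric])
    show "finite ?cls"
      by (rule finite_subset[OF isomorphism_class_subset_restriction[OF A r]]) (use Aut in simp)
    have "?Iso x \<subseteq> Aut C A" if "x \<in> ?cls" for x
      using Aut_eq_UN_iso[OF A r] that by blast
    then show "\<forall>x\<in>?cls. finite (?Iso x)" using Aut finite_subset by blast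
    show "\<forall>x\<in>?cls. \<forall>y\<in>?cls. x \<noteq> y \<longrightarrow> ?Iso x \<inter> ?Iso y = {}"
    proof (intro ballI impI)
      fix x y assume x: "x \<in> ?cls" and y: "y \<in> ?cls" and "x \<noteq> y"
      have "\<alpha> \<notin> ?Iso y" if "\<alpha> \<in> ?Iso x" for \<alpha>
        using that x y restriction_unique[OF _ _ ro, of x A y \<alpha>] \<open>x \<noteq> y\<close>
        unfolding inverse_pair_def by blast
      then show "?Iso x \<inter> ?Iso y = {}" by blast
    qed
  qed
  also have "\<dots> = card (Aut C A)" using Aut_eq_UN_iso[OF A r] by simp
  finally show ?thesis .
qed

lemma tsim_weighted_sum:
  assumes A: "A \<in> cOb C" and Aut: "finite (Aut C A)" and t: "tsim C A \<noteq> \<infinity>"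
  shows "real (the_enat (tsim C A)) =
    (\<Sum>a\<in>fiber CS U A. real (card (Aut CS a)) / real (card (Aut C A)) * real (the_enat (tsim CS a)))"
proof -
  obtain R where R: "iso_representatives A R" using iso_representatives_exist by blast
  have finR: "finite R" using finite_iso_representatives[OF A t R] .
  have Rf: "R \<subseteq> fiber CS U A" using R unfolding iso_representatives_def by blast
  define cls where "cls r = {x \<in> fiber CS U A. isomorphic CS x r}" for r
  define N where "N = real (card (Aut C A))"
  define T where "T x = real (the_enat (tsim CS x))" for x
  have N: "0 < N" unfolding N_def using Aut C.Aut_id[OF A] card_gt_0_iff by fastforce
  have fiber_eq: "fiber CS U A = (\<Union>r\<in>R. cls r)"
    using R unfolding iso_representatives_def cls_def by blast
  have disjoint: "cls r1 \<inter> cls r2 = {}" if "r1 \<in> R" "r2 \<in> R" "r1 \<noteq> r2" for r1 r2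
  proof -
    have "\<not> isomorphic CS r1 r2" using R that unfolding iso_representatives_def by blast
    then show ?thesis
      using isomorphic_trans_fiber[of r1 A _ r2] S.isomorphic_sym that Rf unfolding cls_def by blast
  qed
  have class_sum: "(\<Sum>x\<in>cls r. real (card (Aut CS x)) / N * T x) = T r" if r: "r \<in> R" for r
  proof -
    have "(\<Sum>x\<in>cls r. real (card (Aut CS x)) / N * T x) =
        (\<Sum>x\<in>cls r. real (card (Aut CS x))) * T r / N"
      using tsim_isomorphic_in_fiber[OF A t R r] unfolding cls_def T_def
      by (simp add: sum_divide_distrib sum_distrib_right)
    also have "(\<Sum>x\<in>cls r. real (card (Aut CS x))) = N"
      using sum_card_Aut_isomorphism_class[OF A Aut] r Rf unfolding cls_def N_def
      by (simp add: of_nat_sum[symmetric] subset_iff)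
    finally show ?thesis using N by simp
  qed
  have "tsim CS r \<noteq> \<infinity>" if "r \<in> R" for r
    using tsim_fiber_le[OF A, of r] that Rf t by (metis enat_ord_simps(5) subsetD)
  then have fin_tsim: "\<forall>r\<in>R. tsim CS r \<noteq> \<infinity>" by blast
  have "(\<Sum>a\<in>fiber CS U A. real (card (Aut CS a)) / N * T a) = (\<Sum>r\<in>R. T r)"
    unfolding fiber_eq using class_sum finR disjoint finite_fiber[OF A Aut R finR] fiber_eq
    by (subst sum.UNION_disjoint) auto
  also have "\<dots> = real (the_enat (tsim C A))"
    using tsim_eq_sum_representatives[OF A R finR] sum_enat_the_enat[OF fin_tsim]
    unfolding T_def by simp
  finally show ?thesis unfolding N_def T_def by simp
qed

lemma tsim_finite_iff:
  assumes A: "A \<in> cOb C" and Aut: "finite (Aut C A)"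
  shows "tsim C A \<noteq> \<infinity> \<longleftrightarrow> finite (fiber CS U A) \<and> (\<forall>a\<in>fiber CS U A. tsim CS a \<noteq> \<infinity>)"
proof -
  obtain R where R: "iso_representatives A R" using iso_representatives_exist by blast
  then have Rf: "R \<subseteq> fiber CS U A" unfolding iso_representatives_def by blast
  show ?thesis
  proof
    assume t: "tsim C A \<noteq> \<infinity>"
    have "tsim CS a \<noteq> \<infinity>" if "a \<in> fiber CS U A" for a
      using tsim_fiber_le[OF A that] t by (metis enat_ord_simps(5))
    then show "finite (fiber CS U A) \<and> (\<forall>a\<in>fiber CS U A. tsim CS a \<noteq> \<infinity>)"
      using finite_fiber[OF A Aut R finite_iso_representatives[OF A t R]] by blast
  next
    assume "finite (fiber CS U A) \<and> (\<forall>a\<in>fiber CS U A. tsim CS a \<noteq> \<infinity>)"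
    then have "finite R" "\<forall>r\<in>R. tsim CS r \<noteq> \<infinity>" using Rf finite_subset by blast+
    then show "tsim C A \<noteq> \<infinity>"
      using tsim_eq_sum_representatives[OF A R] sum_enat_the_enat[of R "tsim CS"] by simp
  qed
qed

end

theorem corollary6p4:
  fixes C :: "('o, 'm) cat" and CS :: "('e, 'm) cat" and U :: "'e \<Rightarrow> 'o" and A :: 'o
  assumes "expansion CS C U"
    and "reasonable CS C U"
    and "unique_restrictions CS C U"
    and "expansion_property CS C U"
    and "all_mono C"
    and "directed CS"
    and "A \<in> cOb C"
    and "finite (Aut C A)"
  shows
    "(tsim C A \<noteq> \<infinity> \<longleftrightarrow>
        finite (fiber CS U A) \<and> (\<forall>a\<in>fiber CS U A. tsim CS a \<noteq> \<infinity>)) \<and>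
     (tsim C A \<noteq> \<infinity> \<longrightarrow>
        real (the_enat (tsim C A)) =
          (\<Sum>a\<in>fiber CS U A. real (card (Aut CS a)) / real (card (Aut C A))
                               * real (the_enat (tsim CS a)))) \<and>
     (\<forall>R. finite (fiber CS U A) \<and> (\<forall>a\<in>fiber CS U A. tsim CS a \<noteq> \<infinity>) \<and>
          R \<subseteq> fiber CS U A \<and>
          (\<forall>a\<in>fiber CS U A. \<exists>r\<in>R. isomorphic CS a r) \<and>
          (\<forall>r1\<in>R. \<forall>r2\<in>R. isomorphic CS r1 r2 \<longrightarrow> r1 = r2)
        \<longrightarrow> tsim C A = (\<Sum>r\<in>R. tsim CS r))"
proof -
  interpret ramsey_expansion C CS U
    using assms(1,3,4,6) by unfold_locales
  note A = assms(7) and Aut = assms(8)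
  have "tsim C A = (\<Sum>r\<in>R. tsim CS r)"
    if "finite (fiber CS U A)" and "iso_representatives A R" for R
    using tsim_eq_sum_representatives[OF A that(2)] that finite_subset
    unfolding iso_representatives_def by blast
  then show ?thesis
    using tsim_finite_iff[OF A Aut] tsim_weighted_sum[OF A Aut]
    unfolding iso_representatives_def by blast
qed

end
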